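(* There is an absolute constant $c>0$ such that the following holds. Let $\mathcal{J}$ be an input set for Machine Covering on $m$ machines that is proper of degree $d$, with $n$ divisible by $8$, arriving in uniformly random order, and run the procedure $A_d$ on it. Then, with probability at least $c$, every large job is scheduled onto a large machine.
   Context: Machine Covering: $n$ jobs with non-negative sizes assigned to $m$ identical parallel machines, maximizing the minimum load; $\mathrm{OPT}(\mathcal{J})$ is the optimal offline minimum load. $P_i$ is the $i$-th largest job size. A job is large if its size exceeds $\frac{\mathrm{OPT}(\mathcal{J})}{100\sqrt[4]{m}}$, small otherwise; $k$ is the number of large jobs. $\mathcal{J}$ is simple if $n<m$, or $k\ge m$, or $k\le m-\frac{m^{3/4}}{50}$; otherwise it is proper of degree $d:=\lceil\log_2(m-k)\rceil$. Procedure $A_d$ (online, knows $n$): designate $2^d$ machines as small machines and the other $m-2^d$ as large machines. Sampling phase: each of the first $n/8$ arriving jobs is assigned to a least loaded large machine; then let $P^{\uparrow}$ be the $\left(\frac{m-2^d}{8}-\frac{\sqrt m}{2}\right)$-th largest size among these $n/8$ jobs. Partition phase: set $\tau=0$; for each subsequent job of size $p$: if $p\ge P^\uparrow$, assign it to a least loaded large machine; otherwise, if $p>\tau$, set $\tau:=p$ with probability $\frac{1}{9\cdot 2^d\sqrt m}$ (independent coin); then if $p\le\tau$ assign the job to a least loaded small machine, else to a least loaded large machine. *)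

theory Defs
  imports "HOL-Probability.Probability"
begin

text \<open>An input is a list ps of job sizes; job j (j < length ps) has size ps ! j.
  An assignment maps jobs to machines {..<m}.\<close>

definition load :: "real list \<Rightarrow> (nat \<Rightarrow> nat) \<Rightarrow> nat \<Rightarrow> real" where
  "load ps f i = (\<Sum>j\<in>{j. j < length ps \<and> f j = i}. ps ! j)"

text \<open>Optimal offline minimum load (m \<ge> 1 assumed where used).\<close>
definition OPT :: "nat \<Rightarrow> real list \<Rightarrow> real" where
  "OPT m ps = Max ((\<lambda>f. Min (load ps f ` {..<m})) ` ({..<length ps} \<rightarrow>\<^sub>E {..<m}))"

definition large_job :: "nat \<Rightarrow> real list \<Rightarrow> nat \<Rightarrow> bool" where
  "large_job m ps j \<longleftrightarrow> ps ! j > OPT m ps / (100 * root 4 (real m))"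

definition num_large :: "nat \<Rightarrow> real list \<Rightarrow> nat" where
  "num_large m ps = card {j. j < length ps \<and> large_job m ps j}"

definition simple_input :: "nat \<Rightarrow> real list \<Rightarrow> bool" where
  "simple_input m ps \<longleftrightarrow> length ps < m \<or> num_large m ps \<ge> m \<or>
      real (num_large m ps) \<le> real m - real m powr (3/4) / 50"

definition proper_input :: "nat \<Rightarrow> real list \<Rightarrow> bool" where
  "proper_input m ps \<longleftrightarrow> \<not> simple_input m ps"

definition degree :: "nat \<Rightarrow> real list \<Rightarrow> nat" where
  "degree m ps = nat \<lceil>log 2 (real (m - num_large m ps))\<rceil>"

definition coin_prob :: "nat \<Rightarrow> nat \<Rightarrow> real" where
  "coin_prob m d = 1 / (9 * 2 ^ d * sqrt (real m))"

text \<open>Least loaded machine in S; ties broken by smallest index (irrelevant for the event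
  considered, which only depends on whether a job goes to a small or a large machine).\<close>
definition least_loaded :: "(nat \<Rightarrow> real) \<Rightarrow> nat set \<Rightarrow> nat" where
  "least_loaded L S = (LEAST i. i \<in> S \<and> (\<forall>j\<in>S. L i \<le> L j))"

text \<open>Threshold P-up: the r-th largest size among the first n/8 arriving jobs, where
  r = ceiling((m - 2^d)/8 - sqrt m / 2). Arrival order: job \<pi> t arrives at time t.\<close>
definition threshold :: "nat \<Rightarrow> nat \<Rightarrow> real list \<Rightarrow> (nat \<Rightarrow> nat) \<Rightarrow> real" where
  "threshold m d ps \<pi> =
     (let xs = rev (sort (map (\<lambda>t. ps ! \<pi> t) [0..<length ps div 8]));
          r = nat \<lceil>real (m - 2 ^ d) / 8 - sqrt (real m) / 2\<rceil>
      in xs ! (r - 1))"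

text \<open>Machines {..<2^d} are small, {2^d..<m} are large. State: loads, assignment, tau.
  cs t is the independent coin used (if needed) at time t.\<close>
fun Ad_step :: "nat \<Rightarrow> nat \<Rightarrow> real list \<Rightarrow> (nat \<Rightarrow> nat) \<Rightarrow> (nat \<Rightarrow> bool) \<Rightarrow> real \<Rightarrow>
    (nat \<Rightarrow> real) \<times> (nat \<Rightarrow> nat) \<times> real \<Rightarrow> nat \<Rightarrow> (nat \<Rightarrow> real) \<times> (nat \<Rightarrow> nat) \<times> real" where
  "Ad_step m d ps \<pi> cs Pup (L, A, \<tau>) t =
    (let j = \<pi> t; p = ps ! j;
         put = (\<lambda>S \<tau>'. let i = least_loaded L S in (L(i := L i + p), A(j := i), \<tau>'))
     in if t < length ps div 8 then put {2 ^ d..<m} \<tau>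
        else if Pup \<le> p then put {2 ^ d..<m} \<tau>
        else (let \<tau>' = (if \<tau> < p \<and> cs t then p else \<tau>)
              in if p \<le> \<tau>' then put {..<2 ^ d} \<tau>' else put {2 ^ d..<m} \<tau>'))"

definition Ad_run :: "nat \<Rightarrow> nat \<Rightarrow> real list \<Rightarrow> (nat \<Rightarrow> nat) \<Rightarrow> (nat \<Rightarrow> bool) \<Rightarrow> nat \<Rightarrow> nat" where
  "Ad_run m d ps \<pi> cs =
     fst (snd (foldl (Ad_step m d ps \<pi> cs (threshold m d ps \<pi>)) (\<lambda>_. 0, \<lambda>_. 0, 0)
                     [0..<length ps]))"

definition Ad_space :: "nat \<Rightarrow> nat \<Rightarrow> real list \<Rightarrow> ((nat \<Rightarrow> nat) \<times> (nat \<Rightarrow> bool)) pmf" where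
  "Ad_space m d ps = pair_pmf (pmf_of_set {\<pi>. \<pi> permutes {..<length ps}})
      (Pi_pmf {..<length ps} False (\<lambda>_. bernoulli_pmf (coin_prob m d)))"

end

theory Submission
  imports Defs
begin

text \<open>
  Let \<open>\<theta>\<close> be the cutoff for large jobs and \<open>S\<close> a set of the \<open>s \<approx> m - 2^d - 8\<surd>m\<close> largest
  large jobs. The number of \<open>S\<close>-jobs among the \<open>n/8\<close> sampled ones is hypergeometric with mean
  \<open>s/8\<close> and variance at most its mean, so by Chebyshev's inequality, with probability at least
  \<open>1/2\<close>, fewer than \<open>r \<approx> (m - 2^d)/8 - \<surd>m/2\<close> of them are sampled. Then \<open>P\<up>\<close>, the
  \<open>r\<close>-th largest sampled size, is at most the size of every job of \<open>S\<close>.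

  As long as \<open>\<tau> \<le> \<theta>\<close>, a large job can only reach a small machine if its own coin sets
  \<open>\<tau>\<close> to its size, and this coin is only tossed if the job arrives below \<open>P\<up>\<close>, hence outside
  \<open>S\<close>. There are at most \<open>k - s \<le> 2^d + 8\<surd>m\<close> such jobs, so with probability at least
  \<open>(1 - q)^(k - s) \<ge> 1/10\<close>, where \<open>q\<close> is the coin probability, all their coins fail,
  \<open>\<tau>\<close> never exceeds \<open>\<theta>\<close>, and every large job goes to a large machine. Together this gives
  \<open>c = 1/20\<close>.
\<close>

section \<open>Hypergeometric tail bound for random permutations\<close>

lemma card_permutes_compose_left:
  assumes "finite A" and "\<rho> permutes A"
  shows "card {p. p permutes A \<and> Q p} = card {p. p permutes A \<and> Q (\<rho> \<circ> p)}"
proof -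
  have fin: "finite {p. p permutes A}"
    using finite_permutations[OF assms(1)] .
  have "card {p. p permutes A \<and> Q p} = (\<Sum>p | p permutes A. of_bool (Q p) :: nat)"
    using fin by (simp add: Collect_conj_eq)
  also have "\<dots> = (\<Sum>p | p permutes A. of_bool (Q (\<rho> \<circ> p)))"
    by (rule setum_permutations_compose_left[OF assms(2)])
  also have "\<dots> = card {p. p permutes A \<and> Q (\<rho> \<circ> p)}"
    using fin by (simp add: Collect_conj_eq)
  finally show ?thesis .
qed

lemma permutes_fixing_eq:
  assumes "t \<in> A"
  shows "{p. p permutes A \<and> p t = t \<and> Q p} = {p. p permutes (A - {t}) \<and> Q p}"
  using assms permutes_subset[of _ "A - {t}" A] permutes_not_in[of _ "A - {t}" t]
  by (auto intro: permutes_superset)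

lemma card_permutes_value:
  assumes "finite A" "t \<in> A" "a \<in> A"
  shows "card {p. p permutes A \<and> p t = a} = fact (card A - 1)"
proof -
  let ?\<rho> = "Transposition.transpose a t"
  have "card {p. p permutes A \<and> p t = a} = card {p. p permutes A \<and> ?\<rho> (p t) = a}"
    using card_permutes_compose_left[OF assms(1) permutes_swap_id[OF assms(3,2)],
        where Q = "\<lambda>p. p t = a"] by simp
  also have "{p. p permutes A \<and> ?\<rho> (p t) = a} = {p. p permutes (A - {t})}"
    using permutes_fixing_eq[OF assms(2), of "\<lambda>_. True"] by (auto simp: transpose_eq_iff)
  also have "card \<dots> = fact (card A - 1)"
    using card_permutations[of "A - {t}"] assms by simp
  finally show ?thesis .
qed

lemma card_permutes_two_values:
  assumes "finite A" "t \<in> A" "t' \<in> A" "t \<noteq> t'" "a \<in> A" "b \<in> A" "a \<noteq> b"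
  shows "card {p. p permutes A \<and> p t = a \<and> p t' = b} = fact (card A - 2)"
proof -
  let ?\<rho> = "Transposition.transpose a t"
  have swap_iff: "?\<rho> x = y \<longleftrightarrow> x = ?\<rho> y" for x y
    by auto
  have "card {p. p permutes A \<and> p t = a \<and> p t' = b} =
      card {p. p permutes A \<and> ?\<rho> (p t) = a \<and> ?\<rho> (p t') = b}"
    using card_permutes_compose_left[OF assms(1) permutes_swap_id[OF assms(5,2)],
        where Q = "\<lambda>p. p t = a \<and> p t' = b"] by simp
  also have "{p. p permutes A \<and> ?\<rho> (p t) = a \<and> ?\<rho> (p t') = b} =
      {p. p permutes (A - {t}) \<and> p t' = ?\<rho> b}"
    using permutes_fixing_eq[OF assms(2), of "\<lambda>p. p t' = ?\<rho> b"] by (simp add: swap_iff)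
  also have "card \<dots> = fact (card (A - {t}) - 1)"
    using assms by (intro card_permutes_value) (auto simp: Transposition.transpose_def)
  also have "card (A - {t}) - 1 = card A - 2"
    using assms by simp
  finally show ?thesis .
qed

lemma card_permutes_value_in:
  assumes "finite A" "S \<subseteq> A" "t \<in> A"
  shows "card {p. p permutes A \<and> p t \<in> S} = card S * fact (card A - 1)"
proof -
  have "{p. p permutes A \<and> p t \<in> S} = (\<Union>a\<in>S. {p. p permutes A \<and> p t = a})"
    by auto
  also have "card \<dots> = (\<Sum>a\<in>S. card {p. p permutes A \<and> p t = a})"
    using assms finite_permutations[OF assms(1)]
    by (intro card_UN_disjoint) (auto intro: finite_subset rev_finite_subset)
  also have "\<dots> = (\<Sum>a\<in>S. fact (card A - 1))"
    using assms by (intro sum.cong refl card_permutes_value) auto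
  finally show ?thesis
    by simp
qed

lemma card_permutes_two_values_in:
  assumes "finite A" "S \<subseteq> A" "t \<in> A" "t' \<in> A" "t \<noteq> t'"
  shows "card {p. p permutes A \<and> p t \<in> S \<and> p t' \<in> S} = card S * (card S - 1) * fact (card A - 2)"
proof -
  have fin_S: "finite S"
    using assms(1,2) finite_subset by blast
  have fin: "finite {p. p permutes A \<and> Q p}" for Q
    using finite_permutations[OF assms(1)] by (rule rev_finite_subset) auto
  have "{p. p permutes A \<and> p t \<in> S \<and> p t' \<in> S} =
      (\<Union>a\<in>S. \<Union>b\<in>S - {a}. {p. p permutes A \<and> p t = a \<and> p t' = b})"
    using assms(5) by (auto dest: permutes_inj injD)
  also have "card \<dots> = (\<Sum>a\<in>S. card (\<Union>b\<in>S - {a}. {p. p permutes A \<and> p t = a \<and> p t' = b}))"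
    using fin_S fin by (intro card_UN_disjoint) auto
  also have "\<dots> = (\<Sum>a\<in>S. \<Sum>b\<in>S - {a}. card {p. p permutes A \<and> p t = a \<and> p t' = b})"
    using fin_S fin by (intro sum.cong refl card_UN_disjoint) auto
  also have "\<dots> = (\<Sum>a\<in>S. \<Sum>b\<in>S - {a}. fact (card A - 2))"
    using assms by (intro sum.cong refl card_permutes_two_values) auto
  also have "\<dots> = (\<Sum>a\<in>S. (card S - 1) * fact (card A - 2))"
    using fin_S by (intro sum.cong refl) auto
  finally show ?thesis
    by simp
qed

lemma sum_permutes_hits:
  assumes "finite A" "S \<subseteq> A" "T \<subseteq> A"
  shows "(\<Sum>p | p permutes A. \<Sum>t\<in>T. of_bool (p t \<in> S) :: real) =
    real (card T) * real (card S) * fact (card A - 1)"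
proof -
  have fin: "finite {p. p permutes A}"
    using finite_permutations[OF assms(1)] .
  have "(\<Sum>p | p permutes A. \<Sum>t\<in>T. of_bool (p t \<in> S) :: real) =
      (\<Sum>t\<in>T. real (card {p. p permutes A \<and> p t \<in> S}))"
    using fin by (subst sum.swap) (simp add: Collect_conj_eq)
  also have "\<dots> = (\<Sum>t\<in>T. real (card S) * fact (card A - 1))"
    using card_permutes_value_in[OF assms(1,2)] assms(3) by (intro sum.cong refl) auto
  finally show ?thesis
    by simp
qed

lemma sum_permutes_hits_squared:
  assumes "finite A" "S \<subseteq> A" "T \<subseteq> A"
  shows "(\<Sum>p | p permutes A. (\<Sum>t\<in>T. of_bool (p t \<in> S) :: real)\<^sup>2) =
    real (card T) * real (card S) * fact (card A - 1) +
    real (card T) * (real (card T) - 1) * real (card S) * (real (card S) - 1) * fact (card A - 2)"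
proof -
  define s where "s = real (card S)"
  have fin: "finite {p. p permutes A}"
    using finite_permutations[OF assms(1)] .
  have fin_T: "finite T"
    using assms(1,3) finite_subset by blast
  have pair_same: "real (card {p. p permutes A \<and> p t \<in> S \<and> p t \<in> S}) = s * fact (card A - 1)"
    if "t \<in> T" for t
    using that assms card_permutes_value_in[of A S t] by (auto simp: s_def)
  have pair_distinct:
    "real (card {p. p permutes A \<and> p t \<in> S \<and> p t' \<in> S}) = s * (s - 1) * fact (card A - 2)"
    if "t \<in> T" "t' \<in> T" "t \<noteq> t'" for t t'
  proof -
    have "t \<in> A" "t' \<in> A"
      using that(1,2) assms(3) by auto
    then show ?thesis
      using card_permutes_two_values_in[OF assms(1,2) _ _ that(3)]
      by (cases "card S") (simp_all add: s_def algebra_simps)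
  qed
  have "(\<Sum>p | p permutes A. (\<Sum>t\<in>T. of_bool (p t \<in> S) :: real)\<^sup>2) =
      (\<Sum>p | p permutes A. \<Sum>t\<in>T. \<Sum>t'\<in>T. of_bool (p t \<in> S \<and> p t' \<in> S))"
    by (simp add: power2_eq_square sum_product of_bool_conj)
  also have "\<dots> = (\<Sum>t\<in>T. \<Sum>t'\<in>T. \<Sum>p | p permutes A. of_bool (p t \<in> S \<and> p t' \<in> S))"
    by (subst sum.swap) (simp add: sum.swap[of _ "{p. p permutes A}"])
  also have "\<dots> = (\<Sum>t\<in>T. \<Sum>t'\<in>T. real (card {p. p permutes A \<and> p t \<in> S \<and> p t' \<in> S}))"
    using fin by (simp add: Collect_conj_eq)
  also have "\<dots> = (\<Sum>t\<in>T. s * fact (card A - 1) + (real (card T) - 1) * (s * (s - 1) * fact (card A - 2)))"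
  proof (intro sum.cong refl)
    fix t assume t: "t \<in> T"
    have "(\<Sum>t'\<in>T - {t}. real (card {p. p permutes A \<and> p t \<in> S \<and> p t' \<in> S})) =
        (\<Sum>t'\<in>T - {t}. s * (s - 1) * fact (card A - 2))"
      using t pair_distinct by (intro sum.cong) auto
    moreover have "real (card T - 1) = real (card T) - 1"
      using fin_T t card_gt_0_iff[of T] by auto
    ultimately show "(\<Sum>t'\<in>T. real (card {p. p permutes A \<and> p t \<in> S \<and> p t' \<in> S})) =
        s * fact (card A - 1) + (real (card T) - 1) * (s * (s - 1) * fact (card A - 2))"
      using pair_same[OF t] fin_T t
      by (simp add: sum.remove[OF fin_T t] card_Diff_singleton)
  qed
  finally show ?thesis
    by (simp add: s_def algebra_simps)
qed

text \<open>The left-hand side is \<open>card A!\<close> times the hypergeometric variance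
  \<open>\<mu> (card A - card T) (card A - card S) / (card A (card A - 1))\<close>; only the bound by the mean is needed.\<close>

lemma sum_permutes_hits_variance:
  assumes "finite A" "S \<subseteq> A" "T \<subseteq> A" "2 \<le> card A"
  defines "\<mu> \<equiv> real (card T) * real (card S) / real (card A)"
  shows "(\<Sum>p | p permutes A. ((\<Sum>t\<in>T. of_bool (p t \<in> S) :: real) - \<mu>)\<^sup>2) \<le> fact (card A) * \<mu>"
proof -
  define n h s where "n = real (card A)" and "h = real (card T)" and "s = real (card S)"
  define F :: real where "F = fact (card A - 2)"
  define X where "X p = (\<Sum>t\<in>T. of_bool (p t \<in> S) :: real)" for p :: "'a \<Rightarrow> 'a"
  have n2: "2 \<le> n"
    using assms(4) by (simp add: n_def)
  have fact_pred: "fact (card A - 1) = (n - 1) * F"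
    using assms(4) fact_reduce[of "card A - 1", where 'a = real]
    by (simp add: F_def n_def numeral_2_eq_2 Suc_diff_Suc)
  have fact_n: "fact (card A) = n * ((n - 1) * F)"
    using assms(4) fact_reduce[of "card A", where 'a = real] fact_pred by (simp add: n_def)
  have h_le: "h \<le> n" and s_le: "s \<le> n"
    using card_mono[OF assms(1,3)] card_mono[OF assms(1,2)] by (simp_all add: h_def s_def n_def)
  have h_cases: "h = 0 \<or> 1 \<le> h"
    by (auto simp: h_def)
  have fin: "card {p. p permutes A} = fact (card A)"
    using card_permutations[OF refl assms(1)] by simp
  have first: "(\<Sum>p | p permutes A. X p) = h * s * ((n - 1) * F)"
    using sum_permutes_hits[OF assms(1-3)] fact_pred by (simp add: X_def h_def s_def)
  have second: "(\<Sum>p | p permutes A. (X p)\<^sup>2) = h * s * ((n - 1) * F) + h * (h - 1) * s * (s - 1) * F"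
    using sum_permutes_hits_squared[OF assms(1-3)] fact_pred by (simp add: X_def h_def s_def F_def)
  have "h * (h - 1) * s * (s - 1) * n \<le> (h * s)\<^sup>2 * (n - 1)"
  proof -
    have "(h * s)\<^sup>2 * (n - 1) - h * (h - 1) * s * (s - 1) * n = h * s * ((n - h) * s + n * (h - 1))"
      by (simp add: algebra_simps power2_eq_square)
    moreover have "0 \<le> h * s * ((n - h) * s + n * (h - 1))"
      using h_cases h_le n2 by (auto simp: h_def s_def)
    ultimately show ?thesis
      by simp
  qed
  then have key: "h * (h - 1) * s * (s - 1) * F \<le> (h * s)\<^sup>2 * (n - 1) / n * F"
    using n2 by (intro mult_right_mono) (simp_all add: field_simps F_def)
  have mu: "\<mu> = h * s / n"
    by (simp add: \<mu>_def h_def s_def n_def)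
  have "(\<Sum>p | p permutes A. (X p - \<mu>)\<^sup>2) =
      (\<Sum>p | p permutes A. (X p)\<^sup>2) - 2 * \<mu> * (\<Sum>p | p permutes A. X p) + fact (card A) * \<mu>\<^sup>2"
    by (simp add: power2_diff sum.distrib sum_subtractf sum_distrib_left fin mult_ac)
  also have "\<dots> = h * s * ((n - 1) * F) + h * (h - 1) * s * (s - 1) * F - (h * s)\<^sup>2 * (n - 1) / n * F"
    unfolding first second fact_n mu using n2 by (simp add: field_simps power2_eq_square)
  also have "\<dots> \<le> h * s * ((n - 1) * F)"
    using key by simp
  also have "\<dots> = fact (card A) * \<mu>"
    unfolding fact_n mu using n2 by (simp add: field_simps)
  finally show ?thesis
    by (simp add: X_def)
qed

lemma prob_permutes_hits_less:
  assumes "finite A" "S \<subseteq> A" "T \<subseteq> A" "2 \<le> card A"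
    and "\<mu> = real (card T) * real (card S) / real (card A)" "\<mu> < r"
  shows "1 - \<mu> / (r - \<mu>)\<^sup>2 \<le>
    measure_pmf.prob (pmf_of_set {p. p permutes A}) {p. p permutes A \<and> real (card {t\<in>T. p t \<in> S}) < r}"
proof -
  define P where "P = {p. p permutes A}"
  define X where "X p = (\<Sum>t\<in>T. of_bool (p t \<in> S) :: real)" for p :: "'a \<Rightarrow> 'a"
  define B where "B = {p \<in> P. r \<le> X p}"
  have fin_P: "finite P" and card_P: "card P = fact (card A)"
    using finite_permutations[OF assms(1)] card_permutations[OF refl assms(1)] by (simp_all add: P_def)
  have "id \<in> P"
    by (simp add: P_def)
  then have P_pos: "0 < real (card P)"
    using fin_P card_gt_0_iff by fastforce
  have gap_pos: "0 < (r - \<mu>)\<^sup>2"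
    using assms(6) by simp
  have X_eq: "X p = real (card {t\<in>T. p t \<in> S})" for p
    using finite_subset[OF assms(3,1)] by (simp add: X_def Collect_conj_eq)
  have "real (card B) * (r - \<mu>)\<^sup>2 = (\<Sum>p\<in>B. (r - \<mu>)\<^sup>2)"
    by simp
  also have "\<dots> \<le> (\<Sum>p\<in>B. (X p - \<mu>)\<^sup>2)"
    using assms(6) by (intro sum_mono power_mono) (auto simp: B_def)
  also have "\<dots> \<le> (\<Sum>p\<in>P. (X p - \<mu>)\<^sup>2)"
    using fin_P by (intro sum_mono2) (auto simp: B_def)
  also have "\<dots> \<le> fact (card A) * \<mu>"
    unfolding P_def X_def assms(5) by (rule sum_permutes_hits_variance[OF assms(1-4)])
  finally have "real (card B) / real (card P) \<le> \<mu> / (r - \<mu>)\<^sup>2"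
    using P_pos gap_pos card_P by (simp add: divide_simps mult.commute)
  moreover have "P \<inter> {p. p permutes A \<and> real (card {t\<in>T. p t \<in> S}) < r} = P - B"
    by (auto simp: P_def B_def X_eq)
  moreover have "real (card (P - B)) = real (card P) - real (card B)"
    using fin_P by (simp add: B_def card_Diff_subset card_mono)
  ultimately show ?thesis
    using fin_P P_pos
    by (simp add: measure_pmf_of_set P_def[symmetric] diff_divide_distrib card_gt_0_iff)
qed

lemma prob_sample_hits_less:
  fixes S :: "nat set"
  assumes "S \<subseteq> {..<n}" "8 dvd n" "2 \<le> n" "0 < c" "real (card S) \<le> c"
    and "real (card S) / 8 + sqrt c / 2 \<le> real r"
  shows "1 / 2 \<le> measure_pmf.prob (pmf_of_set {\<pi>. \<pi> permutes {..<n}})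
    {\<pi>. \<pi> permutes {..<n} \<and> card {t. t < n div 8 \<and> \<pi> t \<in> S} < r}"
proof -
  define \<mu> where "\<mu> = real (card S) / 8"
  have \<mu>_eq: "\<mu> = real (card {..<n div 8}) * real (card S) / real (card {..<n})"
    using assms(2,3) by (auto simp: \<mu>_def real_of_nat_div)
  have gap: "sqrt c / 2 \<le> r - \<mu>"
    using assms(6) by (simp add: \<mu>_def)
  have "\<mu> < r"
    using gap real_sqrt_gt_zero[OF assms(4)] by linarith
  have "(sqrt c / 2)\<^sup>2 \<le> (r - \<mu>)\<^sup>2"
    using gap assms(4) by (intro power_mono) auto
  then have "c / 4 \<le> (r - \<mu>)\<^sup>2"
    using assms(4) by (simp add: power_divide)
  moreover have "\<mu> \<le> c / 8"
    using assms(5) by (simp add: \<mu>_def)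
  ultimately have "\<mu> / (r - \<mu>)\<^sup>2 \<le> (c / 8) / (c / 4)"
    using assms(4) by (intro frac_le) auto
  also have "\<dots> = 1 / 2"
    using assms(4) by simp
  finally have "1 / 2 \<le> 1 - \<mu> / (r - \<mu>)\<^sup>2"
    by simp
  also have "\<dots> \<le> measure_pmf.prob (pmf_of_set {\<pi>. \<pi> permutes {..<n}})
      {\<pi>. \<pi> permutes {..<n} \<and> real (card {t\<in>{..<n div 8}. \<pi> t \<in> S}) < real r}"
    using \<open>\<mu> < r\<close> assms(1,3) by (intro prob_permutes_hits_less \<mu>_eq) auto
  finally show ?thesis
    by simp
qed

section \<open>Large jobs stay on large machines while \<open>\<tau> \<le> \<theta>\<close>\<close>

definition Ad_state :: "nat \<Rightarrow> nat \<Rightarrow> real list \<Rightarrow> (nat \<Rightarrow> nat) \<Rightarrow> (nat \<Rightarrow> bool) \<Rightarrow> real \<Rightarrow> nat \<Rightarrow>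
    (nat \<Rightarrow> real) \<times> (nat \<Rightarrow> nat) \<times> real" where
  "Ad_state m d ps \<pi> cs Pup k = foldl (Ad_step m d ps \<pi> cs Pup) (\<lambda>_. 0, \<lambda>_. 0, 0) [0..<k]"

lemma Ad_state_0 [simp]: "Ad_state m d ps \<pi> cs Pup 0 = (\<lambda>_. 0, \<lambda>_. 0, 0)"
  by (simp add: Ad_state_def)

lemma Ad_state_Suc [simp]:
  "Ad_state m d ps \<pi> cs Pup (Suc k) = Ad_step m d ps \<pi> cs Pup (Ad_state m d ps \<pi> cs Pup k) k"
  by (simp add: Ad_state_def)

lemma Ad_run_eq_Ad_state:
  "Ad_run m d ps \<pi> cs = fst (snd (Ad_state m d ps \<pi> cs (threshold m d ps \<pi>) (length ps)))"
  by (simp add: Ad_run_def Ad_state_def)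

lemma least_loaded_in:
  assumes "finite S" "S \<noteq> {}"
  shows "least_loaded L S \<in> S"
proof -
  have "\<exists>i. i \<in> S \<and> (\<forall>j\<in>S. L i \<le> L j)"
    using arg_min_if_finite[OF assms, of L] by (metis not_le)
  then show ?thesis
    unfolding least_loaded_def by (rule LeastI2_ex) blast
qed

lemma Ad_step_large_job_to_large_machine:
  fixes L :: "nat \<Rightarrow> real"
  assumes "\<tau> \<le> \<theta>" "2 ^ d < m"
    and "\<lbrakk>\<theta> < ps ! \<pi> t; ps ! \<pi> t < Pup\<rbrakk> \<Longrightarrow> \<not> cs t"
  obtains L' x \<tau>' where "Ad_step m d ps \<pi> cs Pup (L, A, \<tau>) t = (L', A(\<pi> t := x), \<tau>')"
    and "\<tau>' \<le> \<theta>" and "\<theta> < ps ! \<pi> t \<Longrightarrow> 2 ^ d \<le> x"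
proof -
  define p where "p = ps ! \<pi> t"
  define big where "big = least_loaded L {2 ^ d..<m}"
  have "big \<in> {2 ^ d..<m}"
    unfolding big_def using assms(2) by (intro least_loaded_in) auto
  then have big: "2 ^ d \<le> big"
    by simp
  show ?thesis
  proof (cases "t < length ps div 8 \<or> Pup \<le> p")
    case True
    then show ?thesis
      using assms(1) big by (intro that) (auto simp: Let_def p_def big_def)
  next
    case False
    define \<tau>' where "\<tau>' = (if \<tau> < p \<and> cs t then p else \<tau>)"
    define x where "x = (if p \<le> \<tau>' then least_loaded L {..<2 ^ d} else big)"
    have "Ad_step m d ps \<pi> cs Pup (L, A, \<tau>) t = (L(x := L x + p), A(\<pi> t := x), \<tau>')"
      using False by (simp add: Let_def p_def \<tau>'_def x_def big_def)
    moreover have "\<tau>' \<le> \<theta>"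
      using assms(1,3) False by (cases "\<theta> < p") (auto simp: \<tau>'_def p_def)
    moreover have "2 ^ d \<le> x" if "\<theta> < p"
      \<comment> \<open>the coin of a large job fails, so \<open>\<tau>' = \<tau> \<le> \<theta> < p\<close> and the job goes to a large machine\<close>
      using that assms(1,3) False big by (auto simp: x_def \<tau>'_def p_def)
    ultimately show ?thesis
      unfolding p_def by (rule that)
  qed
qed

lemma Ad_state_invariant:
  assumes "inj \<pi>" "2 ^ d < m" "0 \<le> \<theta>"
    and "\<And>t. \<lbrakk>t < k; \<theta> < ps ! \<pi> t; ps ! \<pi> t < Pup\<rbrakk> \<Longrightarrow> \<not> cs t"
  shows "snd (snd (Ad_state m d ps \<pi> cs Pup k)) \<le> \<theta> \<and>
    (\<forall>t<k. \<theta> < ps ! \<pi> t \<longrightarrow> 2 ^ d \<le> fst (snd (Ad_state m d ps \<pi> cs Pup k)) (\<pi> t))"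
  using assms(4)
proof (induction k)
  case 0
  then show ?case
    using assms(3) by simp
next
  case (Suc k)
  obtain L A \<tau> where state: "Ad_state m d ps \<pi> cs Pup k = (L, A, \<tau>)"
    by (metis prod.exhaust)
  have IH: "\<tau> \<le> \<theta>" "\<And>t. \<lbrakk>t < k; \<theta> < ps ! \<pi> t\<rbrakk> \<Longrightarrow> 2 ^ d \<le> A (\<pi> t)"
    using Suc by (auto simp: state)
  obtain L' x \<tau>' where step: "Ad_step m d ps \<pi> cs Pup (L, A, \<tau>) k = (L', A(\<pi> k := x), \<tau>')"
    and "\<tau>' \<le> \<theta>" and "\<theta> < ps ! \<pi> k \<Longrightarrow> 2 ^ d \<le> x"
    using Ad_step_large_job_to_large_machine[OF IH(1) assms(2), of ps \<pi> k Pup cs L A] Suc.prems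
    by blast
  moreover have "\<pi> t \<noteq> \<pi> k" if "t < k" for t
    using that injD[OF assms(1)] by blast
  ultimately show ?case
    using IH(2) by (auto simp: state less_Suc_eq)
qed

lemma Ad_run_large_jobs_on_large_machines:
  assumes "\<pi> permutes {..<length ps}" "2 ^ d < m" "0 \<le> \<theta>"
    and "\<And>t. \<lbrakk>t < length ps; \<theta> < ps ! \<pi> t; ps ! \<pi> t < threshold m d ps \<pi>\<rbrakk> \<Longrightarrow> \<not> cs t"
    and "j < length ps" "\<theta> < ps ! j"
  shows "2 ^ d \<le> Ad_run m d ps \<pi> cs j"
proof -
  have "inv \<pi> j < length ps" "\<pi> (inv \<pi> j) = j"
    using assms(5) permutes_in_image[OF permutes_inv[OF assms(1)], of j]
      permutes_inverses(1)[OF assms(1)] by simp_all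
  moreover have "\<forall>t<length ps. \<theta> < ps ! \<pi> t \<longrightarrow>
      2 ^ d \<le> fst (snd (Ad_state m d ps \<pi> cs (threshold m d ps \<pi>) (length ps))) (\<pi> t)"
    using Ad_state_invariant[where k = "length ps" and Pup = "threshold m d ps \<pi>"]
      permutes_inj[OF assms(1)] assms(2-4) by blast
  ultimately show ?thesis
    using assms(6) by (metis Ad_run_eq_Ad_state)
qed

section \<open>The sampling threshold\<close>

definition sample_rank :: "nat \<Rightarrow> nat \<Rightarrow> nat" where
  "sample_rank m d = nat \<lceil>real (m - 2 ^ d) / 8 - sqrt (real m) / 2\<rceil>"

lemma threshold_eq_sample_rank:
  "threshold m d ps \<pi> =
    rev (sort (map (\<lambda>t. ps ! \<pi> t) [0..<length ps div 8])) ! (sample_rank m d - 1)"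
  by (simp add: threshold_def sample_rank_def Let_def)

lemma length_filter_greater_rev_sort:
  fixes ys :: "'a::linorder list"
  assumes "1 \<le> r" "r \<le> length ys" "v < rev (sort ys) ! (r - 1)"
  shows "r \<le> length (filter (\<lambda>x. v < x) ys)"
proof -
  define xs where "xs = rev (sort ys)"
  have "v < xs ! i" if "i < r" for i
  proof -
    have "sort ys ! (length ys - r) \<le> sort ys ! (length ys - Suc i)"
      using that assms(1,2) by (intro sorted_nth_mono) auto
    then show ?thesis
      using that assms by (simp add: xs_def rev_nth)
  qed
  then have "{..<r} \<subseteq> {i. i < length xs \<and> v < xs ! i}"
    using assms(2) by (auto simp: xs_def)
  from card_mono[OF _ this] have "r \<le> card {i. i < length xs \<and> v < xs ! i}"
    by simp
  also have "\<dots> = length (filter (\<lambda>x. v < x) xs)"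
    by (rule length_filter_conv_card[symmetric])
  also have "\<dots> = length (filter (\<lambda>x. v < x) ys)"
    unfolding xs_def by (metis length_rev mset_filter mset_sort rev_filter size_mset)
  finally show ?thesis .
qed

lemma card_sample_above_threshold:
  assumes "1 \<le> sample_rank m d" "sample_rank m d \<le> length ps div 8" "v < threshold m d ps \<pi>"
  shows "sample_rank m d \<le> card {t. t < length ps div 8 \<and> v < ps ! \<pi> t}"
proof -
  define ys where "ys = map (\<lambda>t. ps ! \<pi> t) [0..<length ps div 8]"
  have "sample_rank m d \<le> length (filter (\<lambda>x. v < x) ys)"
    using assms by (intro length_filter_greater_rev_sort) (simp_all add: ys_def threshold_eq_sample_rank)
  also have "\<dots> = card {t. t < length ps div 8 \<and> v < ps ! \<pi> t}"
    unfolding ys_def length_filter_conv_card by (intro arg_cong[where f = card]) auto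
  finally show ?thesis .
qed

lemma threshold_le_if_few_sampled:
  assumes "\<pi> permutes {..<length ps}" "1 \<le> sample_rank m d" "sample_rank m d \<le> length ps div 8"
    and "card {t. t < length ps div 8 \<and> \<pi> t \<in> S} < sample_rank m d"
    and "\<And>j. \<lbrakk>j < length ps; v < ps ! j\<rbrakk> \<Longrightarrow> j \<in> S"
  shows "threshold m d ps \<pi> \<le> v"
proof (rule ccontr)
  assume "\<not> threshold m d ps \<pi> \<le> v"
  then have "sample_rank m d \<le> card {t. t < length ps div 8 \<and> v < ps ! \<pi> t}"
    using assms(2,3) by (intro card_sample_above_threshold) auto
  also have "\<dots> \<le> card {t. t < length ps div 8 \<and> \<pi> t \<in> S}"
  proof (intro card_mono subsetI)
    fix t assume t: "t \<in> {t. t < length ps div 8 \<and> v < ps ! \<pi> t}"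
    then have "\<pi> t < length ps"
      using permutes_in_image[OF assms(1), of t] by auto
    then show "t \<in> {t. t < length ps div 8 \<and> \<pi> t \<in> S}"
      using t assms(5) by auto
  qed simp
  finally show False
    using assms(4) by simp
qed

lemma exists_top_subset:
  fixes f :: "'a \<Rightarrow> 'b::linorder"
  assumes "finite L" "s \<le> card L"
  shows "\<exists>S\<subseteq>L. card S = s \<and> (\<forall>i\<in>S. \<forall>j\<in>L. f i < f j \<longrightarrow> j \<in> S)"
  using assms(2)
proof (induction s)
  case 0
  then show ?case
    by auto
next
  case (Suc s)
  then obtain S where S: "S \<subseteq> L" "card S = s" "\<forall>i\<in>S. \<forall>j\<in>L. f i < f j \<longrightarrow> j \<in> S"
    by auto
  have fin_S: "finite S"
    using finite_subset[OF S(1) assms(1)] .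
  have "L - S \<noteq> {}"
  proof
    assume "L - S = {}"
    then have "card L \<le> card S"
      using card_mono[OF fin_S] by blast
    then show False
      using S(2) Suc.prems by simp
  qed
  then have "Max (f ` (L - S)) \<in> f ` (L - S)"
    using assms(1) by (intro Max_in) auto
  then obtain a where a: "a \<in> L - S" "f a = Max (f ` (L - S))"
    by auto
  then have a_max: "\<forall>j\<in>L - S. f j \<le> f a"
    using assms(1) by auto
  show ?case
  proof (intro exI[of _ "insert a S"] conjI)
    show "insert a S \<subseteq> L" "card (insert a S) = Suc s"
      using a S fin_S by auto
    show "\<forall>i\<in>insert a S. \<forall>j\<in>L. f i < f j \<longrightarrow> j \<in> insert a S"
    proof (intro ballI impI)
      fix i j assume "i \<in> insert a S" "j \<in> L" "f i < f j"
      then show "j \<in> insert a S"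
        using a_max S(3) by (metis DiffI insertCI insertE leD)
    qed
  qed
qed

section \<open>Coin tosses\<close>

lemma prob_Pi_pmf_bernoulli_all_False:
  assumes "finite I" "T \<subseteq> I" "0 \<le> q" "q \<le> 1"
  shows "measure_pmf.prob (Pi_pmf I False (\<lambda>_. bernoulli_pmf q)) {cs. \<forall>t\<in>T. \<not> cs t} = (1 - q) ^ card T"
proof -
  define B where "B x = (if x \<in> T then {False} else UNIV)" for x
  have "{cs. \<forall>t\<in>T. \<not> cs t} = Pi I B"
    using assms(2) by (auto simp: B_def Pi_def)
  then have "measure_pmf.prob (Pi_pmf I False (\<lambda>_. bernoulli_pmf q)) {cs. \<forall>t\<in>T. \<not> cs t} =
      (\<Prod>x\<in>I. measure_pmf.prob (bernoulli_pmf q) (B x))"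
    using measure_Pi_pmf_Pi[OF assms(1)] by simp
  also have "\<dots> = (\<Prod>x\<in>I. if x \<in> T then 1 - q else 1)"
    using assms(3,4) by (intro prod.cong) (auto simp: B_def measure_pmf_single)
  also have "\<dots> = (1 - q) ^ card T"
    using assms(1,2) by (simp add: prod.If_cases Int_absorb1)
  finally show ?thesis .
qed

lemma prob_large_jobs_on_large_machines_given_order:
  fixes ps :: "real list"
  assumes "\<pi> permutes {..<length ps}" "2 ^ d < m" "0 \<le> \<theta>"
    and "1 \<le> sample_rank m d" "sample_rank m d \<le> length ps div 8"
    and "S \<subseteq> {j. j < length ps \<and> \<theta> < ps ! j}"
    and "\<And>i j. \<lbrakk>i \<in> S; j < length ps; ps ! i < ps ! j\<rbrakk> \<Longrightarrow> j \<in> S"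
    and "card {t. t < length ps div 8 \<and> \<pi> t \<in> S} < sample_rank m d"
    and "0 \<le> q" "q \<le> 1"
  shows "1 - real (card {j. j < length ps \<and> \<theta> < ps ! j} - card S) * q \<le>
    measure_pmf.prob (Pi_pmf {..<length ps} False (\<lambda>_. bernoulli_pmf q))
      {cs. \<forall>j<length ps. \<theta> < ps ! j \<longrightarrow> 2 ^ d \<le> Ad_run m d ps \<pi> cs j}"
proof -
  define Ls where "Ls = {j. j < length ps \<and> \<theta> < ps ! j}"
  define T where "T = {t. t < length ps \<and> \<theta> < ps ! \<pi> t \<and> ps ! \<pi> t < threshold m d ps \<pi>}"
  \<comment> \<open>\<open>T\<close> also contains sampling times, whose coins are never read; their jobs lie outside \<open>S\<close> too\<close>
  have "\<pi> ` T \<subseteq> Ls - S"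
  proof
    fix j assume "j \<in> \<pi> ` T"
    then obtain t where t: "t \<in> T" "j = \<pi> t"
      by blast
    have "\<pi> t \<notin> S"
    proof
      assume "\<pi> t \<in> S"
      then have "threshold m d ps \<pi> \<le> ps ! \<pi> t"
        using assms(7) by (intro threshold_le_if_few_sampled[OF assms(1,4,5,8)])
      then show False
        using t(1) by (simp add: T_def)
    qed
    then show "j \<in> Ls - S"
      using t permutes_in_image[OF assms(1), of t] by (auto simp: T_def Ls_def)
  qed
  then have "card T \<le> card (Ls - S)"
    using permutes_inj[OF assms(1)] by (intro card_inj_on_le) (auto simp: Ls_def inj_on_def dest: injD)
  also have "\<dots> = card Ls - card S"
    using assms(6) by (intro card_Diff_subset) (auto simp: Ls_def intro: finite_subset)
  finally have card_T: "card T \<le> card Ls - card S" .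
  have "1 - real (card Ls - card S) * q \<le> (1 - q) ^ (card Ls - card S)"
    using Bernoulli_inequality[of "- q" "card Ls - card S"] assms(10) by simp
  also have "\<dots> \<le> (1 - q) ^ card T"
    using card_T assms(9,10) by (intro power_decreasing) auto
  also have "\<dots> = measure_pmf.prob (Pi_pmf {..<length ps} False (\<lambda>_. bernoulli_pmf q)) {cs. \<forall>t\<in>T. \<not> cs t}"
    using assms(9,10) by (intro prob_Pi_pmf_bernoulli_all_False[symmetric]) (auto simp: T_def)
  also have "\<dots> \<le> measure_pmf.prob (Pi_pmf {..<length ps} False (\<lambda>_. bernoulli_pmf q))
      {cs. \<forall>j<length ps. \<theta> < ps ! j \<longrightarrow> 2 ^ d \<le> Ad_run m d ps \<pi> cs j}"
  proof (rule measure_pmf.finite_measure_mono)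
    show "{cs. \<forall>t\<in>T. \<not> cs t} \<subseteq> {cs. \<forall>j<length ps. \<theta> < ps ! j \<longrightarrow> 2 ^ d \<le> Ad_run m d ps \<pi> cs j}"
    proof (intro subsetI CollectI allI impI)
      fix cs j assume "cs \<in> {cs. \<forall>t\<in>T. \<not> cs t}" "j < length ps" "\<theta> < ps ! j"
      then show "2 ^ d \<le> Ad_run m d ps \<pi> cs j"
        by (intro Ad_run_large_jobs_on_large_machines[OF assms(1-3)]) (auto simp: T_def)
    qed
  qed simp
  finally show ?thesis
    by (simp add: Ls_def)
qed

lemma measure_pair_pmf_ge:
  assumes "\<And>a. a \<in> G \<Longrightarrow> c \<le> measure_pmf.prob N {b. (a, b) \<in> E}" "0 \<le> c"
  shows "c * measure_pmf.prob M G \<le> measure_pmf.prob (pair_pmf M N) E"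
proof -
  have "ennreal c * emeasure M G = (\<integral>\<^sup>+a. ennreal c * indicator G a \<partial>M)"
    by (simp add: nn_integral_cmult_indicator)
  also have "\<dots> \<le> (\<integral>\<^sup>+a. emeasure N {b. (a, b) \<in> E} \<partial>M)"
    using assms(1) by (intro nn_integral_mono) (auto simp: indicator_def measure_pmf.emeasure_eq_measure)
  also have "\<dots> = (\<integral>\<^sup>+a. \<integral>\<^sup>+b. indicator E (a, b) \<partial>N \<partial>M)"
  proof (intro nn_integral_cong)
    fix a
    have "(\<lambda>b. indicator E (a, b) :: ennreal) = indicator {b. (a, b) \<in> E}"
      by (auto simp: indicator_def)
    then show "emeasure N {b. (a, b) \<in> E} = (\<integral>\<^sup>+b. indicator E (a, b) \<partial>N)"
      by simp
  qed
  also have "\<dots> = (\<integral>\<^sup>+x. indicator E x \<partial>pair_pmf M N)"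
    by (rule nn_integral_pair_pmf'[symmetric])
  also have "\<dots> = emeasure (pair_pmf M N) E"
    by simp
  finally show ?thesis
    using assms(2) by (simp add: measure_pmf.emeasure_eq_measure ennreal_mult[symmetric])
qed

section \<open>Parameters of proper inputs\<close>

lemma OPT_nonneg:
  assumes "1 \<le> m" "\<forall>p\<in>set ps. 0 \<le> p"
  shows "0 \<le> OPT m ps"
proof -
  define F where "F = {..<length ps} \<rightarrow>\<^sub>E {..<m}"
  define f0 where "f0 = (\<lambda>j. if j < length ps then (0::nat) else undefined)"
  have "f0 \<in> F"
    using assms(1) by (auto simp: F_def f0_def PiE_def extensional_def)
  have "0 \<le> load ps f i" for f i
    unfolding load_def using assms(2) by (intro sum_nonneg) auto
  then have "0 \<le> Min (load ps f0 ` {..<m})"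
    using assms(1) by (subst Min_ge_iff) (auto simp: lessThan_empty_iff)
  also have "\<dots> \<le> Max ((\<lambda>f. Min (load ps f ` {..<m})) ` F)"
    using \<open>f0 \<in> F\<close> by (intro Max_ge) (auto simp: F_def finite_PiE)
  finally show ?thesis
    unfolding OPT_def F_def .
qed

lemma two_pow_ceiling_log_bounds:
  fixes x :: real
  assumes "1 \<le> x"
  shows "x \<le> 2 ^ nat \<lceil>log 2 x\<rceil>" and "2 ^ nat \<lceil>log 2 x\<rceil> < 2 * x"
proof -
  have pow: "(2::real) ^ nat \<lceil>log 2 x\<rceil> = 2 powr \<lceil>log 2 x\<rceil>"
    using assms powr_realpow[of 2 "nat \<lceil>log 2 x\<rceil>"] by simp
  have "x = 2 powr (log 2 x)"
    using assms by simp
  also have "\<dots> \<le> 2 powr \<lceil>log 2 x\<rceil>"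
    by (intro powr_mono) auto
  finally show "x \<le> 2 ^ nat \<lceil>log 2 x\<rceil>"
    using pow by simp
  have "2 powr \<lceil>log 2 x\<rceil> < 2 powr (log 2 x + 1)"
    by (intro powr_less_mono) linarith+
  also have "\<dots> = 2 * x"
    using assms by (simp add: powr_add)
  finally show "2 ^ nat \<lceil>log 2 x\<rceil> < 2 * x"
    using pow by simp
qed

lemma proper_degree_bounds:
  fixes m k :: nat
  assumes "k < m" "real m - real m powr (3/4) / 50 < real k"
  defines "D \<equiv> (2::real) ^ nat \<lceil>log 2 (real (m - k))\<rceil>"
  shows "real (m - k) \<le> D" and "13 \<le> sqrt (real m)" and "8 * sqrt (real m) \<le> real m - D"
proof -
  have x_ge: "1 \<le> real (m - k)"
    using assms(1) by simp
  have x_lt: "real (m - k) < real m powr (3/4) / 50"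
    using assms(1,2) by simp
  have m_ge: "1 \<le> real m"
    using assms(1) by simp
  have "(50::real) ^ 4 < (real m powr (3/4)) ^ 4"
    using x_ge x_lt by (intro power_strict_mono) auto
  also have "(real m powr (3/4)) ^ 4 = real m powr (real 4 * (3/4))"
    using m_ge by (intro powr_power) auto
  also have "\<dots> = real m ^ 3"
    using m_ge powr_realpow[of "real m" 3] by simp
  finally have m_cube: "(50::real) ^ 4 < real m ^ 3" .
  have "169 \<le> real m"
  proof (rule ccontr)
    assume "\<not> 169 \<le> real m"
    then have "real m ^ 3 \<le> 169 ^ 3"
      by (intro power_mono) auto
    then show False
      using m_cube by simp
  qed
  then have "sqrt 169 \<le> sqrt (real m)"
    by (subst real_sqrt_le_iff) simp
  then show sqrt_m: "13 \<le> sqrt (real m)"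
    by simp
  show "real (m - k) \<le> D"
    unfolding D_def by (rule two_pow_ceiling_log_bounds(1)[OF x_ge])
  have "real m powr (3/4) \<le> real m powr 1"
    using m_ge by (intro powr_mono) auto
  then have "D < real m / 25"
    using two_pow_ceiling_log_bounds(2)[OF x_ge] x_lt m_ge by (simp add: D_def)
  moreover have "8 * sqrt (real m) * 13 \<le> 8 * sqrt (real m) * sqrt (real m)"
    using sqrt_m by (intro mult_left_mono) auto
  ultimately show "8 * sqrt (real m) \<le> real m - D"
    by simp
qed

lemma proper_input_parameters:
  fixes m k n d :: nat
  assumes "k < m" "real m - real m powr (3/4) / 50 < real k" "m \<le> n" "8 dvd n"
    and "d = nat \<lceil>log 2 (real (m - k))\<rceil>"
  shows "2 ^ d < m" and "2 \<le> n" and "1 \<le> sample_rank m d" and "sample_rank m d \<le> n div 8"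
    and "\<exists>s\<le>k. real s / 8 + sqrt (real m) / 2 \<le> real (sample_rank m d) \<and>
      real (k - s) * coin_prob m d \<le> 9 / 10"
proof -
  define D where "D = (2::real) ^ d"
  note bounds = proper_degree_bounds[OF assms(1,2), folded assms(5), folded D_def]
  have D_ge: "1 \<le> D"
    by (simp add: D_def)
  have D_lt: "D < real m"
    using bounds(2,3) by simp
  then have "real (2 ^ d) < real m"
    by (simp add: D_def)
  then show pow_lt: "2 ^ d < m"
    by (simp only: of_nat_less_iff)
  have m_ge: "169 \<le> real m"
    using bounds(2) real_sqrt_le_iff[of 169 "real m"] by simp
  then show "2 \<le> n"
    using assms(3) by simp
  have n_div: "real (n div 8) = real n / 8"
    using assms(4) by (simp add: real_of_nat_div)
  define y where "y = (real m - D) / 8 - sqrt (real m) / 2"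
  have rank: "sample_rank m d = nat \<lceil>y\<rceil>"
    using pow_lt by (simp add: sample_rank_def y_def D_def)
  have y_pos: "0 < y"
    using bounds(2,3) by (simp add: y_def)
  then show "1 \<le> sample_rank m d"
    by (simp add: rank Suc_le_eq)
  have rank_ge: "y \<le> real (sample_rank m d)"
    using of_nat_ceiling[of y] by (simp add: rank)
  have "real (sample_rank m d) < y + 1"
    using y_pos ceiling_correct[of y] by (simp add: rank)
  also have "\<dots> \<le> real (n div 8)"
    using bounds(2) D_ge of_nat_mono[OF assms(3), where 'a = real] by (simp add: y_def n_div field_simps)
  finally show "sample_rank m d \<le> n div 8"
    by simp
  define z where "z = real m - D - 8 * sqrt (real m)"
  define s where "s = nat \<lfloor>z\<rfloor>"
  have z_nonneg: "0 \<le> z"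
    using bounds(3) by (simp add: z_def)
  have s_le: "real s \<le> z" and s_gt: "z - 1 < real s"
    using z_nonneg of_nat_floor[OF z_nonneg] floor_correct[of z] by (simp_all add: s_def)
  have "real s \<le> real k"
    using s_le bounds(1) assms(1) real_sqrt_ge_zero[of "real m"] unfolding z_def by linarith
  then have "s \<le> k"
    by simp
  moreover have "real s / 8 + sqrt (real m) / 2 \<le> real (sample_rank m d)"
    using s_le rank_ge by (simp add: z_def y_def field_simps)
  moreover have "real (k - s) * coin_prob m d \<le> 9 / 10"
  proof -
    have q: "coin_prob m d = 1 / (9 * D * sqrt (real m))"
      by (simp add: coin_prob_def D_def)
    have "real (k - s) \<le> D + 8 * sqrt (real m)"
      using s_gt \<open>s \<le> k\<close> assms(1) by (simp add: z_def)
    then have "real (k - s) * coin_prob m d \<le> (D + 8 * sqrt (real m)) * coin_prob m d"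
      using D_ge by (intro mult_right_mono) (simp_all add: q)
    also have "\<dots> = 1 / (9 * sqrt (real m)) + 8 / (9 * D)"
    proof -
      have "0 < D" "0 < sqrt (real m)"
        using D_ge bounds(2) by linarith+
      then show ?thesis
        by (simp add: q field_simps)
    qed
    also have "\<dots> \<le> 1 / 117 + 8 / 9"
      using D_ge bounds(2) by (intro add_mono frac_le) auto
    finally show ?thesis
      by simp
  qed
  ultimately show "\<exists>s\<le>k. real s / 8 + sqrt (real m) / 2 \<le> real (sample_rank m d) \<and>
      real (k - s) * coin_prob m d \<le> 9 / 10"
    by blast
qed

lemma coin_prob_le_one:
  assumes "1 \<le> m"
  shows "coin_prob m d \<le> 1"
proof -
  have "1 * 1 \<le> (2::real) ^ d * sqrt (real m)"
    using assms by (intro mult_mono) auto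
  then have "1 \<le> 9 * ((2::real) ^ d * sqrt (real m))"
    by simp
  then show ?thesis
    by (simp add: coin_prob_def divide_le_eq_1 mult.assoc)
qed

lemma proper_inputD:
  assumes "proper_input m ps"
  shows "num_large m ps < m" and "real m - real m powr (3/4) / 50 < real (num_large m ps)"
    and "m \<le> length ps"
  using assms by (auto simp: proper_input_def simple_input_def)

lemma proper_input_top_jobs:
  fixes ps :: "real list"
  assumes "proper_input m ps" "8 dvd length ps"
  defines "\<theta> \<equiv> OPT m ps / (100 * root 4 (real m))" and "d \<equiv> degree m ps"
  obtains S where "S \<subseteq> {j. j < length ps \<and> \<theta> < ps ! j}"
    and "\<And>i j. \<lbrakk>i \<in> S; j < length ps; ps ! i < ps ! j\<rbrakk> \<Longrightarrow> j \<in> S"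
    and "real (num_large m ps - card S) * coin_prob m d \<le> 9 / 10"
    and "1 / 2 \<le> measure_pmf.prob (pmf_of_set {\<pi>. \<pi> permutes {..<length ps}})
      {\<pi>. \<pi> permutes {..<length ps} \<and> card {t. t < length ps div 8 \<and> \<pi> t \<in> S} < sample_rank m d}"
proof -
  define Ls where "Ls = {j. j < length ps \<and> \<theta> < ps ! j}"
  have card_Ls: "card Ls = num_large m ps"
    by (simp add: Ls_def num_large_def large_job_def \<theta>_def)
  note params = proper_input_parameters[OF proper_inputD[OF assms(1)] assms(2) degree_def, folded d_def]
  obtain s where s: "s \<le> card Ls" "real s / 8 + sqrt (real m) / 2 \<le> real (sample_rank m d)"
    "real (card Ls - s) * coin_prob m d \<le> 9 / 10"
    using params(5) card_Ls by auto
  then obtain S where S: "S \<subseteq> Ls" "card S = s" "\<forall>i\<in>S. \<forall>j\<in>Ls. ps ! i < ps ! j \<longrightarrow> j \<in> S"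
    using exists_top_subset[of Ls s "\<lambda>j. ps ! j"] by (auto simp: Ls_def)
  show ?thesis
  proof (rule that)
    show "S \<subseteq> {j. j < length ps \<and> \<theta> < ps ! j}"
      using S(1) by (simp add: Ls_def)
    show "\<And>i j. \<lbrakk>i \<in> S; j < length ps; ps ! i < ps ! j\<rbrakk> \<Longrightarrow> j \<in> S"
      using S by (force simp: Ls_def)
    show "real (num_large m ps - card S) * coin_prob m d \<le> 9 / 10"
      using s(3) S(2) card_Ls by simp
    have "real (card S) \<le> real m"
      using S(2) s(1) card_Ls proper_inputD(1)[OF assms(1)] by simp
    then show "1 / 2 \<le> measure_pmf.prob (pmf_of_set {\<pi>. \<pi> permutes {..<length ps}})
      {\<pi>. \<pi> permutes {..<length ps} \<and> card {t. t < length ps div 8 \<and> \<pi> t \<in> S} < sample_rank m d}"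
      using S(1,2) s(2) params(2) assms(2) proper_inputD(1)[OF assms(1)]
      by (intro prob_sample_hits_less) (auto simp: Ls_def)
  qed
qed

theorem lemma8:
  "\<exists>c::real. c > 0 \<and>
     (\<forall>m ps. (\<forall>p\<in>set ps. 0 \<le> p) \<and> 8 dvd length ps \<and> proper_input m ps \<longrightarrow>
        measure_pmf.prob (Ad_space m (degree m ps) ps)
          {(\<pi>, cs). \<forall>j<length ps. large_job m ps j \<longrightarrow>
                       2 ^ degree m ps \<le> Ad_run m (degree m ps) ps \<pi> cs j} \<ge> c)"
proof (intro exI[of _ "1/20"] conjI allI impI)
  fix m ps
  assume "(\<forall>p\<in>set (ps::real list). 0 \<le> p) \<and> 8 dvd length ps \<and> proper_input m ps"
  then have nonneg: "\<forall>p\<in>set ps. 0 \<le> p" and dvd: "8 dvd length ps" and proper: "proper_input m ps"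
    by auto
  define d q where "d = degree m ps" and "q = coin_prob m d"
  define \<theta> where "\<theta> = OPT m ps / (100 * root 4 (real m))"
  note params = proper_input_parameters[OF proper_inputD[OF proper] dvd degree_def, folded d_def]
  obtain S where S: "S \<subseteq> {j. j < length ps \<and> \<theta> < ps ! j}"
    "\<And>i j. \<lbrakk>i \<in> S; j < length ps; ps ! i < ps ! j\<rbrakk> \<Longrightarrow> j \<in> S" "real (num_large m ps - card S) * q \<le> 9 / 10"
    and half: "1 / 2 \<le> measure_pmf.prob (pmf_of_set {\<pi>. \<pi> permutes {..<length ps}})
      {\<pi>. \<pi> permutes {..<length ps} \<and> card {t. t < length ps div 8 \<and> \<pi> t \<in> S} < sample_rank m d}"
    using proper_input_top_jobs[OF proper dvd] unfolding \<theta>_def d_def q_def by blast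
  have "0 \<le> \<theta>" "0 \<le> q" "q \<le> 1"
    using OPT_nonneg[OF _ nonneg] coin_prob_le_one params(1)
    by (simp_all add: \<theta>_def q_def coin_prob_def)
  then have "1 / 10 \<le> measure_pmf.prob (Pi_pmf {..<length ps} False (\<lambda>_. bernoulli_pmf q))
      {cs. \<forall>j<length ps. large_job m ps j \<longrightarrow> 2 ^ d \<le> Ad_run m d ps \<pi> cs j}"
    if "\<pi> permutes {..<length ps} \<and> card {t. t < length ps div 8 \<and> \<pi> t \<in> S} < sample_rank m d" for \<pi>
    using prob_large_jobs_on_large_machines_given_order[of \<pi> ps d m \<theta> S q] that S params(1,3,4)
    by (simp add: large_job_def \<theta>_def num_large_def)
  then have "1 / 10 * (1 / 2) \<le> measure_pmf.prob (Ad_space m d ps)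
      {(\<pi>, cs). \<forall>j<length ps. large_job m ps j \<longrightarrow> 2 ^ d \<le> Ad_run m d ps \<pi> cs j}"
    unfolding Ad_space_def q_def[symmetric]
    by (intro order.trans[OF mult_left_mono[OF half] measure_pair_pmf_ge]) auto
  then show "1 / 20 \<le> measure_pmf.prob (Ad_space m (degree m ps) ps)
      {(\<pi>, cs). \<forall>j<length ps. large_job m ps j \<longrightarrow> 2 ^ degree m ps \<le> Ad_run m (degree m ps) ps \<pi> cs j}"
    by (simp add: d_def)
qed simp

end
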